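(* Consider the parametric convex semi-infinite problem described in the context. Let $((\bar c,\bar b),\bar x)\in\operatorname{gph}\mathcal{S}$ and assume that $P(\bar c,\bar b)$ satisfies the Slater condition. Then there exist $M>0$, a neighbourhood $U$ of $\bar x$ and a neighbourhood $V$ of $(\bar c,\bar b)$ such that for all $(c,b)\in V$ and all $x\in\mathcal{S}(c,b)\cap U$ there exists $u\in\partial f(x)$ with $$-(c+u)\in[0,M]\,\operatorname{co}\Big(\bigcup_{t\in T_b(x)}\partial g_t(x)\Big).$$
   Context: Setting: $T$ is a compact subset of a metric space $Z$ with $T\neq Z$; $f:\mathbb{R}^n\to\mathbb{R}$ and $g_t:\mathbb{R}^n\to\mathbb{R}$ ($t\in T$) are convex, with $(t,x)\mapsto g_t(x)$ continuous on $T\times\mathbb{R}^n$. $\mathcal{C}(T,\mathbb{R})$ is the space of continuous $b:T\to\mathbb{R}$, $t\mapsto b_t$, with $\|b\|_\infty=\max_t|b_t|$; the parameter space $\mathbb{R}^n\times\mathcal{C}(T,\mathbb{R})$ carries the norm $\max\{\|c\|,\|b\|_\infty\}$. $P(c,b)$: minimize $f(x)+\langle c,x\rangle$ subject to $g_t(x)\le b_t$, $t\in T$; $\mathcal{S}(c,b)$ is its optimal solution set; $T_b(x)=\{t\in T:g_t(x)=b_t\}$. Slater condition for $P(\bar c,\bar b)$: some $\hat x$ has $g_t(\hat x)<\bar b_t$ for all $t$. $\partial$ is the convex subdifferential, co the convex hull, and for $A\subset\mathbb{R}^n$, $[0,M]\operatorname{co}(A):=\{\lambda y:\lambda\in[0,M],\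 y\in\operatorname{co}(A)\}\cup\{0_n\}$. *)

theory Defs
  imports "HOL-Analysis.Analysis"
begin

definition subdiff :: "('a::real_inner \<Rightarrow> real) \<Rightarrow> 'a \<Rightarrow> 'a set" where
  "subdiff f x = {u. \<forall>y. f x + inner u (y - x) \<le> f y}"

definition feasible :: "'z set \<Rightarrow> ('z \<Rightarrow> 'a \<Rightarrow> real) \<Rightarrow> ('z \<Rightarrow> real) \<Rightarrow> 'a set" where
  "feasible T g b = {x. \<forall>t\<in>T. g t x \<le> b t}"

definition optsol :: "'z set \<Rightarrow> ('a::real_inner \<Rightarrow> real) \<Rightarrow> ('z \<Rightarrow> 'a \<Rightarrow> real)
    \<Rightarrow> 'a \<Rightarrow> ('z \<Rightarrow> real) \<Rightarrow> 'a set" where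
  "optsol T f g c b = {x \<in> feasible T g b.
      \<forall>y \<in> feasible T g b. f x + inner c x \<le> f y + inner c y}"

definition active :: "'z set \<Rightarrow> ('z \<Rightarrow> 'a \<Rightarrow> real) \<Rightarrow> ('z \<Rightarrow> real) \<Rightarrow> 'a \<Rightarrow> 'z set" where
  "active T g b x = {t \<in> T. g t x = b t}"

definition scaled_hull :: "real \<Rightarrow> 'a::real_vector set \<Rightarrow> 'a set" where
  "scaled_hull M A = {l *\<^sub>R y | l y. l \<in> {0..M} \<and> y \<in> convex hull A} \<union> {0}"

end

theory Submission
  imports Defs
begin

(* Let G be the union of the subdifferentials of the active constraints at x. If -(c + u) lies
   outside [0,M] co G for every subgradient u of f at x, then a hyperplane with normal d separates
   0 from the closed convex set c + subdiff f x + M co ({0} Un G); here G is compact because T is.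
   Moving from x against d and towards the Slater point gives a direction on which every
   subgradient of the objective and of the active constraints has negative slope. A convex
   function that does not decrease along a ray has a subgradient with nonnegative slope on it
   (separate its strict epigraph from the ray), so the objective and the active constraints
   strictly decrease along that direction, and compactness of T yields a feasible step with smaller
   objective value, contradicting optimality. M = B / eta works uniformly because the Slater margin
   eta and the bound B on the objective gap to the Slater point are locally uniform in (c, b, x). *)

lemma convex_strict_epigraph:
  assumes "convex_on UNIV h"
  shows "convex {(y, r). h y < (r::real)}"
proof (rule convexI, clarsimp)
  fix y1 y2 and r1 r2 u v :: real
  assume lt: "h y1 < r1" "h y2 < r2" and uv: "0 \<le> u" "0 \<le> v" "u + v = 1"
  have "h (u *\<^sub>R y1 + v *\<^sub>R y2) \<le> u * h y1 + v * h y2"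
    using assms uv by (simp add: convex_on_def)
  also have "\<dots> < u * r1 + v * r2"
  proof (cases "u = 0")
    case False
    then show ?thesis
      using lt uv by (intro add_less_le_mono mult_strict_left_mono mult_left_mono) auto
  qed (use lt uv in simp)
  finally show "h (u *\<^sub>R y1 + v *\<^sub>R y2) < u * r1 + v * r2" .
qed

lemma separating_hyperplane_epigraph_ray:
  fixes h :: "'a::euclidean_space \<Rightarrow> real"
  assumes h: "convex_on UNIV h" and ray: "\<And>s. s > 0 \<Longrightarrow> h x \<le> h (x + s *\<^sub>R e)"
  shows "\<exists>p q \<beta>. q > 0 \<and> (\<forall>s\<ge>0. inner p (x + s *\<^sub>R e) + q * h x \<le> \<beta>)
    \<and> (\<forall>y r. h y < r \<longrightarrow> \<beta> \<le> inner p y + q * r)"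
proof -
  define L where "L = (+) (x, h x) ` ((\<lambda>s. s *\<^sub>R (e, 0)) ` {0::real..})"
  define E where "E = {(y, r). h y < r}"
  have "convex L"
    unfolding L_def by (intro convex_translation convex_scaled convex_real_interval)
  moreover have "convex E"
    unfolding E_def using h by (rule convex_strict_epigraph)
  moreover have "L \<noteq> {}" "(x, h x + 1) \<in> E"
    unfolding L_def E_def by auto
  moreover have "L \<inter> E = {}"
    unfolding L_def E_def using ray by (force simp: le_less)
  ultimately obtain a \<beta> where "a \<noteq> 0" and below: "\<forall>z\<in>L. inner a z \<le> \<beta>"
      and above: "\<forall>z\<in>E. \<beta> \<le> inner a z"
    by (metis empty_iff separating_hyperplane_sets)
  obtain p q where a: "a = (p, q)" by fastforce
  have ray_below: "inner p (x + s *\<^sub>R e) + q * h x \<le> \<beta>" if "s \<ge> 0" for s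
    using below that unfolding L_def a by (force simp: algebra_simps)
  have epi_above: "\<beta> \<le> inner p y + q * r" if "h y < r" for y r
    using above that unfolding E_def a by force
  have "q \<ge> 0"
    using ray_below[of 0] epi_above[of x "h x + 1"] by (simp add: algebra_simps)
  moreover have "q \<noteq> 0"
  proof
    assume "q = 0"
    then have "p \<noteq> 0" using \<open>a \<noteq> 0\<close> a by (simp add: zero_prod_def)
    then have "inner p p > 0" by simp
    moreover have "inner p x \<le> \<beta>" "\<beta> \<le> inner p x - inner p p"
      using ray_below[of 0] epi_above[of "x - p" "h (x - p) + 1"] \<open>q = 0\<close>
      by (simp_all add: inner_diff_right)
    ultimately show False by linarith
  qed
  ultimately show ?thesis
    using ray_below epi_above by (intro exI[of _ p] exI[of _ q] exI[of _ \<beta>]) auto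
qed

lemma exists_subgradient_inner_nonneg:
  fixes h :: "'a::euclidean_space \<Rightarrow> real"
  assumes "convex_on UNIV h" and "\<And>s. s > 0 \<Longrightarrow> h x \<le> h (x + s *\<^sub>R e)"
  shows "\<exists>v\<in>subdiff h x. inner v e \<ge> 0"
proof -
  obtain p q \<beta> where "q > 0" and ray_below: "\<And>s. s \<ge> 0 \<Longrightarrow> inner p (x + s *\<^sub>R e) + q * h x \<le> \<beta>"
      and epi_above: "\<And>y r. h y < r \<Longrightarrow> \<beta> \<le> inner p y + q * r"
    using separating_hyperplane_epigraph_ray[OF assms] by blast
  have supporting: "\<beta> \<le> inner p y + q * h y" for y
  proof (rule field_le_epsilon)
    fix \<epsilon> :: real assume "\<epsilon> > 0"
    then show "\<beta> \<le> inner p y + q * h y + \<epsilon>"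
      using epi_above[of y "h y + \<epsilon> / q"] \<open>q > 0\<close> by (simp add: algebra_simps)
  qed
  define v where "v = - (1 / q) *\<^sub>R p"
  have "v \<in> subdiff h x"
    unfolding subdiff_def
  proof (intro CollectI allI)
    fix y
    have "q * (h x + inner v (y - x)) \<le> q * h y"
      using ray_below[of 0] supporting[of y] \<open>q > 0\<close>
      by (simp add: v_def algebra_simps inner_diff_right)
    then show "h x + inner v (y - x) \<le> h y"
      using \<open>q > 0\<close> by simp
  qed
  moreover have "inner v e \<ge> 0"
    using ray_below[of 1] supporting[of x] \<open>q > 0\<close>
    by (simp add: v_def inner_add_right divide_nonpos_pos)
  ultimately show ?thesis by blast
qed

lemma subgradient_inequality:
  assumes "v \<in> subdiff h x"
  shows "inner v (y - x) \<le> h y - h x"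
  using assms by (auto simp: subdiff_def algebra_simps)

lemma subdiff_nonempty:
  fixes h :: "'a::euclidean_space \<Rightarrow> real"
  assumes "convex_on UNIV h"
  shows "subdiff h x \<noteq> {}"
  using exists_subgradient_inner_nonneg[OF assms, of x 0] by auto

lemma convex_on_descent_step:
  fixes h :: "'a::euclidean_space \<Rightarrow> real"
  assumes "convex_on UNIV h" and "\<And>v. v \<in> subdiff h x \<Longrightarrow> inner v e < 0"
  shows "\<exists>s>0. h (x + s *\<^sub>R e) < h x"
  using exists_subgradient_inner_nonneg[OF assms(1), of x e] assms(2) by force

lemma continuous_less_along_ray:
  fixes h :: "'a::real_normed_vector \<Rightarrow> real"
  assumes "continuous_on UNIV h" and "h x < a"
  shows "\<exists>s>0. h (x + s *\<^sub>R e) < a"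
proof -
  have "isCont (\<lambda>s. x + s *\<^sub>R e) 0"
    by (intro continuous_intros)
  moreover have "isCont h (x + 0 *\<^sub>R e)"
    using assms(1) by (simp add: continuous_on_eq_continuous_at)
  ultimately have "isCont (\<lambda>s. h (x + s *\<^sub>R e)) 0"
    by (rule isCont_o2)
  then have "((\<lambda>s. h (x + s *\<^sub>R e)) \<longlongrightarrow> h x) (at 0)"
    using isContD by fastforce
  then have "\<forall>\<^sub>F s in at 0. h (x + s *\<^sub>R e) < a"
    using assms(2) by (rule order_tendstoD(2))
  then obtain d where "d > 0" and d: "\<And>s. s \<noteq> 0 \<Longrightarrow> dist s 0 < d \<Longrightarrow> h (x + s *\<^sub>R e) < a"
    by (auto simp: eventually_at)
  then show ?thesis
    by (intro exI[of _ "d / 2"]) auto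
qed

lemma convex_on_less_along_ray:
  fixes h :: "'a::real_vector \<Rightarrow> real"
  assumes "convex_on UNIV h" and "h x \<le> a" and "h (x + s0 *\<^sub>R e) < a" and "0 < s" "s \<le> s0"
  shows "h (x + s *\<^sub>R e) < a"
proof -
  define t where "t = s / s0"
  have t: "0 < t" "t \<le> 1"
    using assms(4,5) by (auto simp: t_def)
  have "x + s *\<^sub>R e = (1 - t) *\<^sub>R x + t *\<^sub>R (x + s0 *\<^sub>R e)"
    using assms(4,5) by (simp add: t_def algebra_simps)
  then have "h (x + s *\<^sub>R e) \<le> (1 - t) * h x + t * h (x + s0 *\<^sub>R e)"
    using assms(1) t by (auto intro: convex_onD)
  also have "\<dots> < (1 - t) * a + t * a"
    using assms(2,3) t by (intro add_le_less_mono mult_left_mono mult_strict_left_mono) auto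
  finally show ?thesis
    by (simp add: algebra_simps)
qed

lemma closed_subdiff: "closed (subdiff h x)"
proof -
  have "subdiff h x = (\<Inter>y. {u. inner u (y - x) \<le> h y - h x})"
    unfolding subdiff_def by (auto simp: algebra_simps)
  then show ?thesis
    by (auto intro!: closed_INT closed_Collect_le continuous_intros)
qed

lemma convex_subdiff: "convex (subdiff h x)"
proof -
  have "subdiff h x = (\<Inter>y. {u. inner (y - x) u \<le> h y - h x})"
    unfolding subdiff_def by (auto simp: inner_commute algebra_simps)
  then show ?thesis
    by (auto intro!: convex_INT convex_halfspace_le)
qed

lemma subdiff_add_inner: "subdiff (\<lambda>y. h y + inner c y) x = (+) c ` subdiff h x"
proof (intro set_eqI)
  fix w
  have "h x + inner c x + inner w (y - x) \<le> h y + inner c y \<longleftrightarrow>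
      h x + inner (w - c) (y - x) \<le> h y" for y
    by (simp add: inner_diff_left inner_diff_right) linarith
  then have "w \<in> subdiff (\<lambda>y. h y + inner c y) x \<longleftrightarrow> w - c \<in> subdiff h x"
    unfolding subdiff_def by simp
  also have "\<dots> \<longleftrightarrow> w \<in> (+) c ` subdiff h x"
    by (metis add_diff_cancel_left' diff_add_cancel add.commute image_iff)
  finally show "w \<in> subdiff (\<lambda>y. h y + inner c y) x \<longleftrightarrow> w \<in> (+) c ` subdiff h x" .
qed

lemma continuous_on_fix_snd:
  assumes "continuous_on (A \<times> B) (\<lambda>(t, y). g t y)" and "y \<in> B"
  shows "continuous_on A (\<lambda>t. g t y)"
  using continuous_on_compose2[OF assms(1) continuous_on_Pair[OF continuous_on_id continuous_on_const]]
    assms(2) by auto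

lemma norm_subgradient_le:
  fixes h :: "'a::real_inner \<Rightarrow> real"
  assumes v: "v \<in> subdiff h x" and "r > 0" and K: "\<And>y. y \<in> cball x r \<Longrightarrow> \<bar>h y\<bar> \<le> K"
  shows "r * norm v \<le> 2 * K"
proof (cases "v = 0")
  case True
  then show ?thesis using K[of x] \<open>r > 0\<close> by simp
next
  case False
  define y where "y = x + (r / norm v) *\<^sub>R v"
  have "y \<in> cball x r"
    using False \<open>r > 0\<close> by (simp add: y_def dist_norm)
  have "inner v (y - x) = r * norm v"
    using False by (simp add: y_def power2_norm_eq_inner[symmetric] power2_eq_square)
  moreover have "inner v (y - x) \<le> h y - h x"
    using v by (rule subgradient_inequality)
  ultimately show ?thesis
    using K[OF \<open>y \<in> cball x r\<close>] K[of x] \<open>r > 0\<close> by simp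
qed

lemma closed_subdiff_graph:
  assumes "closed A" and g: "continuous_on (A \<times> UNIV) (\<lambda>(t, y). g t y)"
  shows "closed {(t, v). t \<in> A \<and> v \<in> subdiff (g t) x}"
proof -
  have eq: "{(t, v). t \<in> A \<and> v \<in> subdiff (g t) x} =
      (\<Inter>y. (A \<times> UNIV) \<inter> (\<lambda>(t, v). g t x + inner v (y - x) - g t y) -` {..0})"
    unfolding subdiff_def by auto
  have cont: "continuous_on (A \<times> UNIV) (\<lambda>(t, v). g t x + inner v (y - x) - g t y)" for y
  proof -
    have "continuous_on (A \<times> UNIV) (\<lambda>p. g (fst p) z)" for z
      using continuous_on_compose2[OF continuous_on_fix_snd[OF g, of z]
          continuous_on_fst[OF continuous_on_id], of "A \<times> UNIV"] by auto
    then show ?thesis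
      by (auto simp: case_prod_beta' intro!: continuous_intros)
  qed
  show ?thesis
    unfolding eq using \<open>closed A\<close>
    by (intro closed_INT ballI continuous_closed_preimage[OF cont] closed_Times closed_UNIV closed_atMost)
qed

lemma compact_UN_subdiff:
  fixes g :: "'z::metric_space \<Rightarrow> 'a::euclidean_space \<Rightarrow> real"
  assumes "compact A" and g: "continuous_on (A \<times> UNIV) (\<lambda>(t, y). g t y)"
  shows "compact (\<Union>t\<in>A. subdiff (g t) x)"
proof -
  define S where "S = {(t, v). t \<in> A \<and> v \<in> subdiff (g t) x}"
  have "compact ((\<lambda>(t, y). g t y) ` (A \<times> cball x 1))"
    using \<open>compact A\<close> by (intro compact_continuous_image continuous_on_subset[OF g] compact_Times) auto
  then obtain K where K: "\<forall>z \<in> (\<lambda>(t, y). g t y) ` (A \<times> cball x 1). norm z \<le> K"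
    using compact_imp_bounded bounded_iff by blast
  have "S \<subseteq> A \<times> cball 0 (2 * K)"
  proof (clarsimp simp: S_def)
    fix t v assume "t \<in> A" "v \<in> subdiff (g t) x"
    moreover have "\<bar>g t y\<bar> \<le> K" if "y \<in> cball x 1" for y
      using K \<open>t \<in> A\<close> that by force
    ultimately show "norm v \<le> 2 * K"
      using norm_subgradient_le[of v "g t" x 1 K] by simp
  qed
  moreover have "closed S"
    unfolding S_def using compact_imp_closed[OF \<open>compact A\<close>] g by (rule closed_subdiff_graph)
  ultimately have "compact S"
    using compact_Int_closed[OF compact_Times[OF \<open>compact A\<close> compact_cball]] by (metis Int_absorb1)
  then have "compact (snd ` S)"
    by (intro compact_continuous_image continuous_intros)
  moreover have "snd ` S = (\<Union>t\<in>A. subdiff (g t) x)"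
  proof
    show "snd ` S \<subseteq> (\<Union>t\<in>A. subdiff (g t) x)"
      unfolding S_def by auto
    show "(\<Union>t\<in>A. subdiff (g t) x) \<subseteq> snd ` S"
    proof clarify
      fix t v assume "t \<in> A" "v \<in> subdiff (g t) x"
      then show "v \<in> snd ` S"
        by (intro rev_image_eqI[of "(t, v)"]) (auto simp: S_def)
    qed
  qed
  ultimately show ?thesis
    by simp
qed

lemma scaleR_mem_scaled_hull:
  assumes "0 \<le> M" and "w \<in> convex hull (insert 0 G)"
  shows "M *\<^sub>R w \<in> scaled_hull M G"
proof (cases "G = {}")
  case True
  then show ?thesis using assms by (simp add: scaled_hull_def)
next
  case False
  then obtain v y where "0 \<le> v" "v \<le> 1" "y \<in> convex hull G" "w = v *\<^sub>R y"
    using assms(2) by (fastforce simp: convex_hull_insert[OF False])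
  moreover have "M * v \<in> {0..M}"
    using \<open>0 \<le> M\<close> \<open>0 \<le> v\<close> \<open>v \<le> 1\<close> by (auto intro: mult_left_le)
  moreover have "M *\<^sub>R w = (M * v) *\<^sub>R y"
    using \<open>w = v *\<^sub>R y\<close> by simp
  ultimately show ?thesis
    unfolding scaled_hull_def by blast
qed

lemma separating_hyperplane_sum_scaled_hull:
  fixes C G :: "'a::euclidean_space set"
  assumes "closed C" "convex C" "compact G" "0 \<le> M"
    and disjoint: "\<And>z. z \<in> C \<Longrightarrow> - z \<notin> scaled_hull M G"
  shows "\<exists>d b. 0 < b \<and> (\<forall>z\<in>C. \<forall>w\<in>convex hull (insert 0 G). b < inner d z + M * inner d w)"
proof -
  define D where "D = (\<Union>z\<in>C. \<Union>y\<in>(\<lambda>w. M *\<^sub>R w) ` (convex hull (insert 0 G)). {z + y})"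
  have "convex D"
    unfolding D_def using assms by (intro convex_sums convex_scaling convex_convex_hull)
  moreover have "closed D"
    unfolding D_def using assms
    by (intro closed_compact_sums compact_scaling compact_convex_hull compact_insert)
  moreover have "0 \<notin> D"
  proof
    assume "0 \<in> D"
    then obtain z w where "z \<in> C" and w: "w \<in> convex hull (insert 0 G)" and "- z = M *\<^sub>R w"
      unfolding D_def by (auto simp: neg_eq_iff_add_eq_0)
    then show False
      using disjoint[OF \<open>z \<in> C\<close>] scaleR_mem_scaled_hull[OF \<open>0 \<le> M\<close> w] by simp
  qed
  ultimately obtain d b where "0 < b" and sep: "\<And>y. y \<in> D \<Longrightarrow> b < inner d y"
    by (metis separating_hyperplane_closed_0)
  have "b < inner d z + M * inner d w" if "z \<in> C" "w \<in> convex hull (insert 0 G)" for z w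
    using sep[of "z + M *\<^sub>R w"] that unfolding D_def by (auto simp: inner_add_right)
  with \<open>0 < b\<close> show ?thesis
    by blast
qed

lemma separating_hyperplane_scaled_hull:
  fixes C G :: "'a::euclidean_space set"
  assumes "closed C" "convex C" "C \<noteq> {}" "compact G" "0 \<le> M"
    and "\<And>z. z \<in> C \<Longrightarrow> - z \<notin> scaled_hull M G"
  shows "\<exists>d m. 0 < m \<and> (\<forall>z\<in>C. m \<le> inner d z) \<and> (\<forall>v\<in>G. - m < M * inner d v)"
proof -
  obtain d b where "0 < b"
    and sep: "\<And>z w. z \<in> C \<Longrightarrow> w \<in> convex hull (insert 0 G) \<Longrightarrow> b < inner d z + M * inner d w"
    using separating_hyperplane_sum_scaled_hull[of C G M] assms by blast
  have sep_C: "b < inner d z" if "z \<in> C" for z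
    using sep[OF that, of 0] by (simp add: hull_inc)
  have sep_G: "b - M * inner d v < inner d z" if "z \<in> C" "v \<in> G" for z v
    using sep[OF that(1), of v] that(2) by (simp add: hull_inc)
  define m where "m = Inf ((\<lambda>z. inner d z) ` C)"
  have "0 < m"
    unfolding m_def using \<open>C \<noteq> {}\<close> sep_C
    by (intro less_le_trans[OF \<open>0 < b\<close>] cInf_greatest) (auto intro: less_imp_le)
  moreover have "m \<le> inner d z" if "z \<in> C" for z
    unfolding m_def using that sep_C by (intro cInf_lower bdd_belowI[of _ b]) (auto intro: less_imp_le)
  moreover have "- m < M * inner d v" if "v \<in> G" for v
  proof -
    have "b - M * inner d v \<le> m"
      unfolding m_def using \<open>C \<noteq> {}\<close> sep_G[OF _ that] by (intro cInf_greatest) (auto intro: less_imp_le)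
    then show ?thesis
      using \<open>0 < b\<close> by linarith
  qed
  ultimately show ?thesis
    by blast
qed

lemma compact_uniform_strict_step:
  fixes g :: "'z::topological_space \<Rightarrow> 'a::real_vector \<Rightarrow> real"
  assumes "compact T"
    and convex: "\<And>t. t \<in> T \<Longrightarrow> convex_on UNIV (g t)"
    and cont: "\<And>y. continuous_on T (\<lambda>t. g t y - b t)"
    and feasible: "\<And>t. t \<in> T \<Longrightarrow> g t x \<le> b t"
    and step: "\<And>t. t \<in> T \<Longrightarrow> \<exists>s>0. g t (x + s *\<^sub>R e) < b t"
  shows "\<exists>s0>0. \<forall>s. 0 < s \<and> s \<le> s0 \<longrightarrow> (\<forall>t\<in>T. g t (x + s *\<^sub>R e) < b t)"
proof -
  obtain \<sigma> where \<sigma>: "\<And>t. t \<in> T \<Longrightarrow> \<sigma> t > 0 \<and> g t (x + \<sigma> t *\<^sub>R e) < b t"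
    using step by metis
  define U where "U t = T \<inter> (\<lambda>t'. g t' (x + \<sigma> t *\<^sub>R e) - b t') -` {..<0}" for t
  have "\<forall>V \<in> U ` T. openin (top_of_set T) V"
    unfolding U_def using cont by (auto intro: continuous_openin_preimage_gen)
  moreover have "T \<subseteq> \<Union>(U ` T)"
    using \<sigma> by (force simp: U_def)
  ultimately obtain \<V> where "\<V> \<subseteq> U ` T" "finite \<V>" "T \<subseteq> \<Union>\<V>"
    using \<open>compact T\<close> unfolding compact_eq_openin_cover by meson
  then obtain F where "F \<subseteq> T" "finite F" and cover: "T \<subseteq> \<Union>(U ` F)"
    using finite_subset_image[of \<V> U T] by blast
  define s0 where "s0 = Min (insert 1 (\<sigma> ` F))"
  have "s0 > 0"
    unfolding s0_def using \<open>finite F\<close> \<open>F \<subseteq> T\<close> \<sigma> by (auto simp: Min_gr_iff)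
  moreover have "g t' (x + s *\<^sub>R e) < b t'" if "0 < s" "s \<le> s0" "t' \<in> T" for s t'
  proof -
    obtain t where "t \<in> F" "t' \<in> U t"
      using cover \<open>t' \<in> T\<close> by blast
    then have "g t' (x + \<sigma> t *\<^sub>R e) < b t'" and "s \<le> \<sigma> t"
      using \<open>s \<le> s0\<close> \<open>finite F\<close> by (auto simp: U_def s0_def)
    then show ?thesis
      using convex_on_less_along_ray[OF convex[OF \<open>t' \<in> T\<close>] feasible[OF \<open>t' \<in> T\<close>]] that
      by blast
  qed
  ultimately show ?thesis
    by blast
qed

lemma exists_feasible_step:
  fixes g :: "'z::topological_space \<Rightarrow> 'a::euclidean_space \<Rightarrow> real"
  assumes "compact T"
    and convex: "\<And>t. t \<in> T \<Longrightarrow> convex_on UNIV (g t)"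
    and cont: "\<And>y. continuous_on T (\<lambda>t. g t y - b t)"
    and "x \<in> feasible T g b"
    and descent: "\<And>t v. t \<in> active T g b x \<Longrightarrow> v \<in> subdiff (g t) x \<Longrightarrow> inner v e < 0"
  shows "\<exists>s0>0. \<forall>s. 0 < s \<and> s \<le> s0 \<longrightarrow> x + s *\<^sub>R e \<in> feasible T g b"
proof -
  have feasible: "g t x \<le> b t" if "t \<in> T" for t
    using \<open>x \<in> feasible T g b\<close> that by (simp add: feasible_def)
  have "\<exists>s>0. g t (x + s *\<^sub>R e) < b t" if "t \<in> T" for t
  proof (cases "g t x = b t")
    case True
    then have "t \<in> active T g b x"
      using that by (simp add: active_def)
    then have "\<exists>s>0. g t (x + s *\<^sub>R e) < g t x"
      using convex_on_descent_step[OF convex[OF that]] descent by blast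
    with True show ?thesis
      by simp
  next
    case False
    then have "g t x < b t"
      using feasible[OF that] by simp
    then show ?thesis
      using continuous_less_along_ray convex_on_continuous[OF open_UNIV convex[OF that]] by blast
  qed
  then obtain s0 where "s0 > 0" "\<forall>s. 0 < s \<and> s \<le> s0 \<longrightarrow> (\<forall>t\<in>T. g t (x + s *\<^sub>R e) < b t)"
    using compact_uniform_strict_step[OF \<open>compact T\<close> convex cont feasible] by blast
  then show ?thesis
    unfolding feasible_def by (auto intro: less_imp_le)
qed

lemma compact_active:
  fixes g :: "'z::t2_space \<Rightarrow> 'a \<Rightarrow> real"
  assumes "compact T" and "continuous_on T (\<lambda>t. g t x - b t)"
  shows "compact (active T g b x)"
proof -
  have "closed {t \<in> T. g t x - b t = 0}"
    by (intro continuous_closed_preimage_constant assms(2) compact_imp_closed[OF assms(1)])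
  moreover have "active T g b x = T \<inter> {t \<in> T. g t x - b t = 0}"
    by (auto simp: active_def)
  ultimately show ?thesis
    using compact_Int_closed[OF \<open>compact T\<close>] by simp
qed

lemma compact_robust_slater:
  fixes g :: "'z::topological_space \<Rightarrow> 'a \<Rightarrow> real"
  assumes "compact T" and "continuous_on T (\<lambda>t. g t xh - b0 t)" and "\<And>t. t \<in> T \<Longrightarrow> g t xh < b0 t"
  shows "\<exists>\<eta>>0. \<forall>b. (\<forall>t\<in>T. \<bar>b t - b0 t\<bar> < \<eta>) \<longrightarrow> (\<forall>t\<in>T. g t xh + \<eta> \<le> b t)"
proof (cases "T = {}")
  case False
  then obtain s where "s \<in> T" and max: "\<And>t. t \<in> T \<Longrightarrow> g t xh - b0 t \<le> g s xh - b0 s"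
    using continuous_attains_sup[OF assms(1) False assms(2)] by blast
  define \<eta> where "\<eta> = (b0 s - g s xh) / 2"
  have "\<eta> > 0"
    using assms(3)[OF \<open>s \<in> T\<close>] by (simp add: \<eta>_def)
  moreover have "g t xh + \<eta> \<le> b t" if "t \<in> T" "\<bar>b t - b0 t\<bar> < \<eta>" for b t
  proof -
    have "b0 t - b t < \<eta>"
      using that(2) by linarith
    then show ?thesis
      using max[OF that(1)] by (simp add: \<eta>_def field_simps)
  qed
  ultimately show ?thesis
    by blast
qed (auto intro!: exI[of _ 1])

lemma convex_on_add_inner:
  assumes "convex_on UNIV f"
  shows "convex_on UNIV (\<lambda>y. f y + inner c y)"
  using assms by (intro convex_on_add) (auto simp: convex_on_def inner_add_right)

lemma bounded_objective_gap:
  fixes f :: "'a::euclidean_space \<Rightarrow> real"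
  assumes "convex_on UNIV f"
  shows "\<exists>B>0. \<forall>c x. norm (c - c0) \<le> 1 \<longrightarrow> norm (x - x0) \<le> 1 \<longrightarrow>
    f y + inner c y - (f x + inner c x) < B"
proof -
  define F where "F p = f y + inner (fst p) y - (f (snd p) + inner (fst p) (snd p))" for p
  have "continuous_on UNIV f"
    using convex_on_continuous[OF open_UNIV assms] .
  then have "continuous_on UNIV (\<lambda>p. f (snd p))"
    using continuous_on_compose2[OF _ continuous_on_snd[OF continuous_on_id]] by blast
  then have "continuous_on UNIV F"
    unfolding F_def by (intro continuous_intros)
  then have "bounded (F ` (cball c0 1 \<times> cball x0 1))"
    by (intro compact_imp_bounded compact_continuous_image compact_Times compact_cball)
      (auto intro: continuous_on_subset)
  then obtain K where K: "\<And>p. p \<in> cball c0 1 \<times> cball x0 1 \<Longrightarrow> \<bar>F p\<bar> \<le> K"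
    unfolding bounded_iff by auto
  show ?thesis
  proof (intro exI[of _ "\<bar>K\<bar> + 1"] conjI allI impI)
    fix c x assume "norm (c - c0) \<le> 1" "norm (x - x0) \<le> 1"
    then have "F (c, x) \<le> K"
      using K[of "(c, x)"] by (simp add: dist_norm norm_minus_commute)
    then show "f y + inner c y - (f x + inner c x) < \<bar>K\<bar> + 1"
      by (simp add: F_def)
  qed simp
qed

lemma common_descent_direction:
  fixes \<phi> :: "'a::real_inner \<Rightarrow> real"
  assumes "\<eta> > 0" "M > 0" "m > 0"
    and slater: "\<And>t. t \<in> A \<Longrightarrow> g t xh + \<eta> \<le> g t x"
    and gap: "\<phi> xh - \<phi> x < M * \<eta>"
    and d_\<phi>: "\<And>w. w \<in> subdiff \<phi> x \<Longrightarrow> m \<le> inner d w"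
    and d_g: "\<And>t v. t \<in> A \<Longrightarrow> v \<in> subdiff (g t) x \<Longrightarrow> - m < M * inner d v"
  shows "\<exists>e. (\<forall>w\<in>subdiff \<phi> x. inner w e < 0) \<and> (\<forall>t\<in>A. \<forall>v\<in>subdiff (g t) x. inner v e < 0)"
proof -
  (* The pull \<theta> (xh - x) raises the slope of a subgradient of \<phi> by less than \<theta> M \<eta> = m, which
     -d makes up for, and lowers that of an active subgradient by at least \<theta> \<eta> = m / M, which
     makes up for -d. *)
  define \<theta> where "\<theta> = m / (M * \<eta>)"
  define e where "e = \<theta> *\<^sub>R (xh - x) - d"
  have "\<theta> > 0"
    using assms(1-3) by (simp add: \<theta>_def)
  have inner_e: "inner v e = \<theta> * inner v (xh - x) - inner d v" for v
    by (simp add: e_def inner_diff_right inner_commute)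
  have "inner w e < 0" if "w \<in> subdiff \<phi> x" for w
  proof -
    have "\<theta> * inner w (xh - x) < \<theta> * (M * \<eta>)"
      using subgradient_inequality[OF that, of xh] gap \<open>\<theta> > 0\<close> by (intro mult_strict_left_mono) auto
    also have "\<dots> = m"
      using \<open>M > 0\<close> \<open>\<eta> > 0\<close> by (simp add: \<theta>_def)
    finally show ?thesis
      using d_\<phi>[OF that] inner_e[of w] by linarith
  qed
  moreover have "inner v e < 0" if "t \<in> A" "v \<in> subdiff (g t) x" for t v
  proof -
    have "inner v (xh - x) \<le> - \<eta>"
      using subgradient_inequality[OF that(2), of xh] slater[OF that(1)] by simp
    then have "\<theta> * inner v (xh - x) \<le> \<theta> * - \<eta>"
      using \<open>\<theta> > 0\<close> by (intro mult_left_mono) auto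
    also have "\<dots> = - m / M"
      using \<open>\<eta> > 0\<close> by (simp add: \<theta>_def)
    also have "\<dots> < inner d v"
      using d_g[OF that] \<open>M > 0\<close> by (simp add: field_simps)
    finally show ?thesis
      using inner_e[of v] by (simp add: inner_commute)
  qed
  ultimately show ?thesis
    by blast
qed

lemma bounded_kkt_at_minimum:
  fixes \<phi> :: "'a::euclidean_space \<Rightarrow> real" and g :: "'z::metric_space \<Rightarrow> 'a \<Rightarrow> real"
  assumes "compact T"
    and \<phi>_convex: "convex_on UNIV \<phi>"
    and g_convex: "\<And>t. t \<in> T \<Longrightarrow> convex_on UNIV (g t)"
    and g_cont: "continuous_on (T \<times> UNIV) (\<lambda>(t, y). g t y)"
    and b_cont: "continuous_on T b"
    and x_feasible: "x \<in> feasible T g b"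
    and x_min: "\<And>y. y \<in> feasible T g b \<Longrightarrow> \<phi> x \<le> \<phi> y"
    and "\<eta> > 0"
    and slater: "\<And>t. t \<in> T \<Longrightarrow> g t xh + \<eta> \<le> b t"
    and gap: "\<phi> xh - \<phi> x < M * \<eta>"
  shows "\<exists>w\<in>subdiff \<phi> x. - w \<in> scaled_hull M (\<Union>t\<in>active T g b x. subdiff (g t) x)"
proof (rule ccontr)
  define A where "A = active T g b x"
  assume "\<not> (\<exists>w\<in>subdiff \<phi> x. - w \<in> scaled_hull M (\<Union>t\<in>A. subdiff (g t) x))"
  have cont_t: "continuous_on T (\<lambda>t. g t y - b t)" for y
    using continuous_on_fix_snd[OF g_cont] b_cont by (auto intro: continuous_intros)
  have "xh \<in> feasible T g b"
    using slater \<open>\<eta> > 0\<close> by (force simp: feasible_def)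
  then have "0 < M * \<eta>"
    using x_min gap by fastforce
  then have "M > 0"
    using \<open>\<eta> > 0\<close> by (simp add: zero_less_mult_iff)
  have "A \<subseteq> T"
    by (auto simp: A_def active_def)
  then have "compact (\<Union>t\<in>A. subdiff (g t) x)"
    unfolding A_def using \<open>compact T\<close> cont_t
    by (intro compact_UN_subdiff compact_active continuous_on_subset[OF g_cont]) auto
  then obtain d m where "m > 0" and d_\<phi>: "\<And>w. w \<in> subdiff \<phi> x \<Longrightarrow> m \<le> inner d w"
      and d_G: "\<And>v. v \<in> (\<Union>t\<in>A. subdiff (g t) x) \<Longrightarrow> - m < M * inner d v"
    using separating_hyperplane_scaled_hull[of "subdiff \<phi> x" _ M] \<open>M > 0\<close>
      \<open>\<not> (\<exists>w\<in>subdiff \<phi> x. - w \<in> scaled_hull M (\<Union>t\<in>A. subdiff (g t) x))\<close>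
    by (metis closed_subdiff convex_subdiff subdiff_nonempty[OF \<phi>_convex] less_imp_le)
  have slater_A: "g t xh + \<eta> \<le> g t x" if "t \<in> A" for t
    using slater that by (auto simp: A_def active_def)
  obtain e where \<phi>_descent: "\<And>w. w \<in> subdiff \<phi> x \<Longrightarrow> inner w e < 0"
      and g_descent: "\<And>t v. t \<in> A \<Longrightarrow> v \<in> subdiff (g t) x \<Longrightarrow> inner v e < 0"
    using common_descent_direction[where A = A and g = g and d = d, OF \<open>\<eta> > 0\<close> \<open>M > 0\<close> \<open>m > 0\<close>
        slater_A gap d_\<phi>] d_G by blast
  obtain s1 where "s1 > 0" and \<phi>_step: "\<phi> (x + s1 *\<^sub>R e) < \<phi> x"
    using convex_on_descent_step[OF \<phi>_convex \<phi>_descent] by blast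
  obtain s0 where "s0 > 0" and feasible_step: "\<And>s. 0 < s \<Longrightarrow> s \<le> s0 \<Longrightarrow> x + s *\<^sub>R e \<in> feasible T g b"
    using exists_feasible_step[OF \<open>compact T\<close> g_convex cont_t x_feasible] g_descent
    unfolding A_def by blast
  define s where "s = min s0 s1"
  have "\<phi> (x + s *\<^sub>R e) < \<phi> x"
    using convex_on_less_along_ray[OF \<phi>_convex order_refl \<phi>_step] \<open>s0 > 0\<close> \<open>s1 > 0\<close>
    by (simp add: s_def)
  moreover have "x + s *\<^sub>R e \<in> feasible T g b"
    using feasible_step \<open>s0 > 0\<close> \<open>s1 > 0\<close> by (simp add: s_def)
  ultimately show False
    using x_min by fastforce
qed

lemma optsol_bounded_multiplier:
  fixes f :: "'a::euclidean_space \<Rightarrow> real" and g :: "'z::metric_space \<Rightarrow> 'a \<Rightarrow> real"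
  assumes "compact T"
    and "convex_on UNIV f"
    and "\<And>t. t \<in> T \<Longrightarrow> convex_on UNIV (g t)"
    and "continuous_on (T \<times> UNIV) (\<lambda>(t, y). g t y)"
    and "continuous_on T b"
    and "x \<in> optsol T f g c b"
    and "\<eta> > 0"
    and "\<And>t. t \<in> T \<Longrightarrow> g t xh + \<eta> \<le> b t"
    and "f xh + inner c xh - (f x + inner c x) < M * \<eta>"
  shows "\<exists>u\<in>subdiff f x. - (c + u) \<in> scaled_hull M (\<Union>t\<in>active T g b x. subdiff (g t) x)"
proof -
  obtain w where "w \<in> subdiff (\<lambda>y. f y + inner c y) x"
      "- w \<in> scaled_hull M (\<Union>t \<in> active T g b x. subdiff (g t) x)"
    using bounded_kkt_at_minimum[OF assms(1) convex_on_add_inner[OF assms(2)] assms(3-5) _ _ assms(7-9)]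
      assms(6) unfolding optsol_def by blast
  then show ?thesis
    by (auto simp: subdiff_add_inner)
qed

theorem lemma4p2:
  fixes T :: "'z::metric_space set"
    and f :: "real^'n \<Rightarrow> real"
    and g :: "'z \<Rightarrow> real^'n \<Rightarrow> real"
    and cbar xbar :: "real^'n"
    and bbar :: "'z \<Rightarrow> real"
  assumes T_compact: "compact T"
    and T_proper: "T \<noteq> UNIV"
    and f_convex: "convex_on UNIV f"
    and g_convex: "\<And>t. t \<in> T \<Longrightarrow> convex_on UNIV (g t)"
    and g_cont: "continuous_on (T \<times> UNIV) (\<lambda>(t, x). g t x)"
    and bbar_cont: "continuous_on T bbar"
    and xbar_opt: "xbar \<in> optsol T f g cbar bbar"
    and slater: "\<exists>xh. \<forall>t\<in>T. g t xh < bbar t"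
  shows "\<exists>M > 0. \<exists>\<epsilon> > 0. \<exists>\<delta> > 0.
           \<forall>c b x. norm (c - cbar) < \<delta> \<longrightarrow> continuous_on T b
             \<longrightarrow> (\<forall>t\<in>T. \<bar>b t - bbar t\<bar> < \<delta>)
             \<longrightarrow> x \<in> optsol T f g c b \<longrightarrow> dist x xbar < \<epsilon>
             \<longrightarrow> (\<exists>u \<in> subdiff f x.
                   - (c + u) \<in> scaled_hull M (\<Union>t \<in> active T g b x. subdiff (g t) x))"
proof -
  obtain xh where xh: "\<And>t. t \<in> T \<Longrightarrow> g t xh < bbar t"
    using slater by blast
  have cont: "continuous_on T (\<lambda>t. g t xh - bbar t)"
    using continuous_on_fix_snd[OF g_cont] bbar_cont by (auto intro: continuous_intros)
  obtain \<eta> where "\<eta> > 0" and slater_robust: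
      "\<forall>b. (\<forall>t\<in>T. \<bar>b t - bbar t\<bar> < \<eta>) \<longrightarrow> (\<forall>t\<in>T. g t xh + \<eta> \<le> b t)"
    using compact_robust_slater[of T g xh bbar, OF T_compact cont xh] by blast
  obtain B where "B > 0" and gap: "\<And>c x. norm (c - cbar) \<le> 1 \<Longrightarrow> norm (x - xbar) \<le> 1 \<Longrightarrow>
      f xh + inner c xh - (f x + inner c x) < B"
    using bounded_objective_gap[OF f_convex] by blast
  define M where "M = B / \<eta>"
  have "M > 0" "min 1 \<eta> > 0"
    using \<open>B > 0\<close> \<open>\<eta> > 0\<close> by (simp_all add: M_def)
  show ?thesis
  proof (rule exI[of _ M], intro conjI exI[of _ "min 1 \<eta>"] allI impI \<open>M > 0\<close> \<open>min 1 \<eta> > 0\<close>)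
    fix c b x
    assume c: "norm (c - cbar) < min 1 \<eta>" and b_cont: "continuous_on T b"
      and b: "\<forall>t\<in>T. \<bar>b t - bbar t\<bar> < min 1 \<eta>"
      and x_opt: "x \<in> optsol T f g c b" and x: "dist x xbar < min 1 \<eta>"
    have slater_b: "\<And>t. t \<in> T \<Longrightarrow> g t xh + \<eta> \<le> b t"
      using slater_robust b by simp
    have "f xh + inner c xh - (f x + inner c x) < M * \<eta>"
      using gap[of c x] c x \<open>\<eta> > 0\<close> by (simp add: M_def dist_norm)
    then show "\<exists>u \<in> subdiff f x. - (c + u) \<in> scaled_hull M (\<Union>t \<in> active T g b x. subdiff (g t) x)"
      using optsol_bounded_multiplier[OF T_compact f_convex g_convex g_cont b_cont x_opt \<open>\<eta> > 0\<close> slater_b]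
      by blast
  qed
qed

end
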